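(* Let $P,PA$ be labelings, $c$ a command and $\rho_1,\rho_2,\mu_1,\mu_2$ states. Assume $\mathtt b\notin\mathrm{UsedVars}(c)$, $\rho_1(\mathtt b)=\rho_2(\mathtt b)=0$, $|a|_{\mu_1}>0$ and $|a|_{\mu_2}>0$ for every array $a$, $P;PA\vdash_{\mathtt{true}}c$, $\rho_1\sim_P\rho_2$, $\mu_1\sim_{PA}\mu_2$, and $\langle c,\rho_1,\mu_1\rangle\approx\langle c,\rho_2,\mu_2\rangle$. Then $\langle\mathrm{FvSLH}_P(c),\rho_1,\mu_1,\mathtt{false}\rangle\approx_s\langle\mathrm{FvSLH}_P(c),\rho_2,\mu_2,\mathtt{false}\rangle$.
   Context: Language AWhile: scalar variables $X\in\mathcal V$, arrays $a\in\mathcal A$; $e::=n\mid X\mid\mathrm{op}_{\mathbb N}(e,\dots,e)\mid be\,?\,e_1:e_2$; $be::=\mathtt{true}\mid\mathtt{false}\mid\mathrm{cmp}(e,e)\mid\mathrm{op}_{\mathbb B}(be,\dots,be)$; $c::=\mathtt{skip}\mid X:=e\mid c_1;c_2\mid\mathtt{if}\ be\ \mathtt{then}\ c_1\ \mathtt{else}\ c_2\mid\mathtt{while}\ be\ \mathtt{do}\ c\mid X\leftarrow a[e]\mid a[e]\leftarrow e'$. Scalar state $\rho:\mathcal V\to\mathbb N$; array state $\mu$ with sizes $|a|_\mu$ and values $\mu(a)[i]$; $[\![\cdot]\!]_\rho$ pure evaluation. $\mathrm{UsedVars}(c)$: scalar variables occurring in $c$; $\mathtt b$ a reserved scalar variable.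 Sequential semantics: $X:=e\to\mathtt{skip}$ updating $X$; $c_1;c_2\xrightarrow{o}c_1';c_2$ if $c_1\xrightarrow{o}c_1'$; $\mathtt{skip};c\to c$; conditional goes to branch $v=[\![be]\!]_\rho$ observing $\mathrm{branch}(v)$; $\mathtt{while}\ be\ \mathtt{do}\ c\to\mathtt{if}\ be\ \mathtt{then}\ (c;\mathtt{while}\ be\ \mathtt{do}\ c)\ \mathtt{else}\ \mathtt{skip}$; $X\leftarrow a[ie]$ with $i=[\![ie]\!]_\rho<|a|_\mu$ sets $X:=\mu(a)[i]$ observing $\mathrm{read}(a,i)$; $a[ie]\leftarrow e$ with $i<|a|_\mu$ sets $\mu[a[i]\mapsto[\![e]\!]_\rho]$ observing $\mathrm{write}(a,i)$. $\langle c_1,\rho_1,\mu_1\rangle\approx\langle c_2,\rho_2,\mu_2\rangle$ iff for all multi-step executions $\langle c_k,\rho_k,\mu_k\rangle\xrightarrow{O_k}{}^*$ (any prefix), one of $O_1,O_2$ is a prefix of the other. Speculative semantics: configurations $\langle c,\rho,\mu,\beta\rangle$; non-observing rules as sequentially (flag kept, no directive). Conditional: with directive $\mathit{step}$ as sequentially; with $\mathit{force}$ go to branch $\neg[\![be]\!]_\rho$, set $\beta:=\mathtt{true}$; obs $\mathrm{branch}([\![be]\!]_\rho)$. Reads/writes with $\mathit{step}$ as sequentially. Read with $\mathrm{load}(a',j)$: requires $\beta=\mathtt{true}$, $i=[\![ie]\!]_\rho\ge|a|_\mu$, $j<|a'|_\mu$, sets $X:=\mu(a')[j]$, obs $\mathrm{read}(a,i)$.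 Write with $\mathrm{store}(a',j)$: requires $\beta=\mathtt{true}$, $i\ge|a|_\mu$, $j<|a'|_\mu$, sets $\mu[a'[j]\mapsto[\![e]\!]_\rho]$, obs $\mathrm{write}(a,i)$. $\langle c_1,\rho_1,\mu_1,\beta_1\rangle\approx_s\langle c_2,\rho_2,\mu_2,\beta_2\rangle$ iff for all $D,O_1,O_2$, whenever both multi-step with the same directive list $D$ producing $O_1,O_2$, $O_1=O_2$. Labels: $\mathtt{true}$=public, $\mathtt{false}$=secret; $\ell_1\sqsubseteq\ell_2$ iff $\ell_2=\mathtt{true}\Rightarrow\ell_1=\mathtt{true}$; $\ell_1\sqcup\ell_2=\ell_1\wedge\ell_2$. $P(e),P(be)$ public iff all variables occurring are public. $\rho_1\sim_P\rho_2$: agreement on public scalar variables; $\mu_1\sim_{PA}\mu_2$: agreement on sizes and contents of public arrays. IFC typing $P;PA\vdash_{pc}c$: $\mathtt{skip}$; $X:=e$ if $pc\sqcup P(e)\sqsubseteq P(X)$; $c_1;c_2$ if both typed under $pc$; $\mathtt{if}$ if both branches typed under $pc\sqcup P(be)$; $\mathtt{while}$ if body typed under $pc\sqcup P(be)$; $X\leftarrow a[i]$ if $pc\sqcup P(i)\sqcup PA(a)\sqsubseteq P(X)$; $a[i]\leftarrow e$ if $pc\sqcup P(i)\sqcup P(e)\sqsubseteq PA(a)$. Transformation $\mathrm{FvSLH}_P$: with $m(i)=(\mathtt b==1)\,?\,0:i$ and $B(be)=(\mathtt b==0\ \&\&\ be)$ if $P(be)=\mathtt{false}$, else $be$: $\mathtt{skip}$,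 $X:=e$ unchanged; sequences translated componentwise; $\mathtt{if}\ be\ \mathtt{then}\ c_1\ \mathtt{else}\ c_2\mapsto\mathtt{if}\ B(be)\ \mathtt{then}\ (\mathtt b:=B(be)\,?\,\mathtt b:1;[\![c_1]\!])\ \mathtt{else}\ (\mathtt b:=B(be)\,?\,1:\mathtt b;[\![c_2]\!])$; $\mathtt{while}\ be\ \mathtt{do}\ c\mapsto(\mathtt{while}\ B(be)\ \mathtt{do}\ (\mathtt b:=B(be)\,?\,\mathtt b:1;[\![c]\!]));\ \mathtt b:=B(be)\,?\,1:\mathtt b$; $X\leftarrow a[i]\mapsto (X\leftarrow a[i];\ X:=(\mathtt b==1)\,?\,0:X)$ if $P(X)=\mathtt{true}$ and $P(i)=\mathtt{true}$; otherwise $X\leftarrow a[m(i)]$ if $P(i)=\mathtt{false}$ and $X\leftarrow a[i]$ if $P(i)=\mathtt{true}$; $a[i]\leftarrow e\mapsto a[m(i)]\leftarrow e$ if $P(i)=\mathtt{false}$, unchanged otherwise. *)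

theory Defs
  imports Main "HOL-Library.Sublist"
begin

type_synonym vname = string
type_synonym aname = string

datatype aexp =
    ANum nat
  | AId vname
  | AOp "nat list \<Rightarrow> nat" "aexp list"
  | ACTIf bexp aexp aexp
and bexp =
    BTrue
  | BFalse
  | BCmp "nat \<Rightarrow> nat \<Rightarrow> bool" aexp aexp
  | BOp "bool list \<Rightarrow> bool" "bexp list"

datatype com =
    Skip
  | Asgn vname aexp
  | Seq com com
  | If bexp com com
  | While bexp com
  | ARead vname aname aexp
  | AWrite aname aexp aexp

type_synonym state = "vname \<Rightarrow> nat"
type_synonym mem = "aname \<Rightarrow> nat list"   (* |a| = length (mu a), mu(a)[i] = mu a ! i *)

definition bvar :: vname where "bvar = ''b''"

fun aeval :: "state \<Rightarrow> aexp \<Rightarrow> nat" and beval :: "state \<Rightarrow> bexp \<Rightarrow> bool" where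
  "aeval s (ANum n) = n"
| "aeval s (AId x) = s x"
| "aeval s (AOp f es) = f (map (aeval s) es)"
| "aeval s (ACTIf b e1 e2) = (if beval s b then aeval s e1 else aeval s e2)"
| "beval s BTrue = True"
| "beval s BFalse = False"
| "beval s (BCmp r e1 e2) = r (aeval s e1) (aeval s e2)"
| "beval s (BOp f bs) = f (map (beval s) bs)"

fun avars :: "aexp \<Rightarrow> vname set" and bvars :: "bexp \<Rightarrow> vname set" where
  "avars (ANum n) = {}"
| "avars (AId x) = {x}"
| "avars (AOp f es) = \<Union> (set (map avars es))"
| "avars (ACTIf b e1 e2) = bvars b \<union> avars e1 \<union> avars e2"
| "bvars BTrue = {}"
| "bvars BFalse = {}"
| "bvars (BCmp r e1 e2) = avars e1 \<union> avars e2"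
| "bvars (BOp f bs) = \<Union> (set (map bvars bs))"

fun used_vars :: "com \<Rightarrow> vname set" where
  "used_vars Skip = {}"
| "used_vars (Asgn x e) = {x} \<union> avars e"
| "used_vars (Seq c1 c2) = used_vars c1 \<union> used_vars c2"
| "used_vars (If b c1 c2) = bvars b \<union> used_vars c1 \<union> used_vars c2"
| "used_vars (While b c) = bvars b \<union> used_vars c"
| "used_vars (ARead x a i) = {x} \<union> avars i"
| "used_vars (AWrite a i e) = avars i \<union> avars e"

datatype obs = OBranch bool | ORead aname nat | OWrite aname nat
datatype dir = DStep | DForce | DLoad aname nat | DStore aname nat

section \<open>Sequential semantics\<close>

inductive seq_step :: "com \<times> state \<times> mem \<Rightarrow> obs list \<Rightarrow> com \<times> state \<times> mem \<Rightarrow> bool" where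
  Asgn: "seq_step (Asgn x e, \<rho>, \<mu>) [] (Skip, \<rho>(x := aeval \<rho> e), \<mu>)"
| Seq: "seq_step (c1, \<rho>, \<mu>) os (c1', \<rho>', \<mu>') \<Longrightarrow> seq_step (Seq c1 c2, \<rho>, \<mu>) os (Seq c1' c2, \<rho>', \<mu>')"
| SeqSkip: "seq_step (Seq Skip c, \<rho>, \<mu>) [] (c, \<rho>, \<mu>)"
| If: "seq_step (If b c1 c2, \<rho>, \<mu>) [OBranch (beval \<rho> b)]
         ((if beval \<rho> b then c1 else c2), \<rho>, \<mu>)"
| While: "seq_step (While b c, \<rho>, \<mu>) [] (If b (Seq c (While b c)) Skip, \<rho>, \<mu>)"
| ARead: "aeval \<rho> ie = i \<Longrightarrow> i < length (\<mu> a) \<Longrightarrow>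
    seq_step (ARead x a ie, \<rho>, \<mu>) [ORead a i] (Skip, \<rho>(x := \<mu> a ! i), \<mu>)"
| AWrite: "aeval \<rho> ie = i \<Longrightarrow> i < length (\<mu> a) \<Longrightarrow>
    seq_step (AWrite a ie e, \<rho>, \<mu>) [OWrite a i] (Skip, \<rho>, \<mu>(a := (\<mu> a)[i := aeval \<rho> e]))"

inductive seq_steps :: "com \<times> state \<times> mem \<Rightarrow> obs list \<Rightarrow> com \<times> state \<times> mem \<Rightarrow> bool" where
  refl: "seq_steps cfg [] cfg"
| step: "seq_step cfg os cfg' \<Longrightarrow> seq_steps cfg' os' cfg'' \<Longrightarrow> seq_steps cfg (os @ os') cfg''"

definition seq_equiv :: "com \<times> state \<times> mem \<Rightarrow> com \<times> state \<times> mem \<Rightarrow> bool" where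
  "seq_equiv cfg1 cfg2 \<longleftrightarrow>
     (\<forall>O1 O2 cfg1' cfg2'. seq_steps cfg1 O1 cfg1' \<longrightarrow> seq_steps cfg2 O2 cfg2' \<longrightarrow>
        prefix O1 O2 \<or> prefix O2 O1)"

section \<open>Speculative semantics\<close>

inductive spec_step :: "com \<times> state \<times> mem \<times> bool \<Rightarrow> dir list \<Rightarrow> obs list \<Rightarrow>
                        com \<times> state \<times> mem \<times> bool \<Rightarrow> bool" where
  Asgn: "spec_step (Asgn x e, \<rho>, \<mu>, \<beta>) [] [] (Skip, \<rho>(x := aeval \<rho> e), \<mu>, \<beta>)"
| Seq: "spec_step (c1, \<rho>, \<mu>, \<beta>) ds os (c1', \<rho>', \<mu>', \<beta>') \<Longrightarrow>
    spec_step (Seq c1 c2, \<rho>, \<mu>, \<beta>) ds os (Seq c1' c2, \<rho>', \<mu>', \<beta>')"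
| SeqSkip: "spec_step (Seq Skip c, \<rho>, \<mu>, \<beta>) [] [] (c, \<rho>, \<mu>, \<beta>)"
| If: "spec_step (If b c1 c2, \<rho>, \<mu>, \<beta>) [DStep] [OBranch (beval \<rho> b)]
         ((if beval \<rho> b then c1 else c2), \<rho>, \<mu>, \<beta>)"
| IfForce: "spec_step (If b c1 c2, \<rho>, \<mu>, \<beta>) [DForce] [OBranch (beval \<rho> b)]
         ((if \<not> beval \<rho> b then c1 else c2), \<rho>, \<mu>, True)"
| While: "spec_step (While b c, \<rho>, \<mu>, \<beta>) [] [] (If b (Seq c (While b c)) Skip, \<rho>, \<mu>, \<beta>)"
| ARead: "aeval \<rho> ie = i \<Longrightarrow> i < length (\<mu> a) \<Longrightarrow>
    spec_step (ARead x a ie, \<rho>, \<mu>, \<beta>) [DStep] [ORead a i] (Skip, \<rho>(x := \<mu> a ! i), \<mu>, \<beta>)"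
| ALoad: "aeval \<rho> ie = i \<Longrightarrow> i \<ge> length (\<mu> a) \<Longrightarrow> j < length (\<mu> a') \<Longrightarrow>
    spec_step (ARead x a ie, \<rho>, \<mu>, True) [DLoad a' j] [ORead a i] (Skip, \<rho>(x := \<mu> a' ! j), \<mu>, True)"
| AWrite: "aeval \<rho> ie = i \<Longrightarrow> i < length (\<mu> a) \<Longrightarrow>
    spec_step (AWrite a ie e, \<rho>, \<mu>, \<beta>) [DStep] [OWrite a i]
      (Skip, \<rho>, \<mu>(a := (\<mu> a)[i := aeval \<rho> e]), \<beta>)"
| AStore: "aeval \<rho> ie = i \<Longrightarrow> i \<ge> length (\<mu> a) \<Longrightarrow> j < length (\<mu> a') \<Longrightarrow>
    spec_step (AWrite a ie e, \<rho>, \<mu>, True) [DStore a' j] [OWrite a i]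
      (Skip, \<rho>, \<mu>(a' := (\<mu> a')[j := aeval \<rho> e]), True)"

inductive spec_steps :: "com \<times> state \<times> mem \<times> bool \<Rightarrow> dir list \<Rightarrow> obs list \<Rightarrow>
                         com \<times> state \<times> mem \<times> bool \<Rightarrow> bool" where
  refl: "spec_steps cfg [] [] cfg"
| step: "spec_step cfg ds os cfg' \<Longrightarrow> spec_steps cfg' ds' os' cfg'' \<Longrightarrow>
    spec_steps cfg (ds @ ds') (os @ os') cfg''"

definition spec_equiv :: "com \<times> state \<times> mem \<times> bool \<Rightarrow> com \<times> state \<times> mem \<times> bool \<Rightarrow> bool" where
  "spec_equiv cfg1 cfg2 \<longleftrightarrow>
     (\<forall>D O1 O2 cfg1' cfg2'. spec_steps cfg1 D O1 cfg1' \<longrightarrow> spec_steps cfg2 D O2 cfg2' \<longrightarrow> O1 = O2)"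

text \<open>True = public, False = secret.\<close>
type_synonym label = bool

definition label_le :: "label \<Rightarrow> label \<Rightarrow> bool" where
  "label_le l1 l2 \<longleftrightarrow> (l2 \<longrightarrow> l1)"

definition join :: "label \<Rightarrow> label \<Rightarrow> label" where
  "join l1 l2 = (l1 \<and> l2)"

definition alabel :: "(vname \<Rightarrow> label) \<Rightarrow> aexp \<Rightarrow> label" where
  "alabel P e \<longleftrightarrow> (\<forall>x\<in>avars e. P x)"

definition blabel :: "(vname \<Rightarrow> label) \<Rightarrow> bexp \<Rightarrow> label" where
  "blabel P be \<longleftrightarrow> (\<forall>x\<in>bvars be. P x)"

definition pub_equiv :: "(vname \<Rightarrow> label) \<Rightarrow> state \<Rightarrow> state \<Rightarrow> bool" where
  "pub_equiv P \<rho>1 \<rho>2 \<longleftrightarrow> (\<forall>x. P x \<longrightarrow> \<rho>1 x = \<rho>2 x)"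

definition pub_equiv_mem :: "(aname \<Rightarrow> label) \<Rightarrow> mem \<Rightarrow> mem \<Rightarrow> bool" where
  "pub_equiv_mem PA \<mu>1 \<mu>2 \<longleftrightarrow> (\<forall>a. PA a \<longrightarrow> \<mu>1 a = \<mu>2 a)"

inductive well_typed :: "(vname \<Rightarrow> label) \<Rightarrow> (aname \<Rightarrow> label) \<Rightarrow> label \<Rightarrow> com \<Rightarrow> bool" where
  Skip: "well_typed P PA pc Skip"
| Asgn: "label_le (join pc (alabel P e)) (P x) \<Longrightarrow> well_typed P PA pc (Asgn x e)"
| Seq: "well_typed P PA pc c1 \<Longrightarrow> well_typed P PA pc c2 \<Longrightarrow> well_typed P PA pc (Seq c1 c2)"
| If: "well_typed P PA (join pc (blabel P b)) c1 \<Longrightarrow> well_typed P PA (join pc (blabel P b)) c2 \<Longrightarrow>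
    well_typed P PA pc (If b c1 c2)"
| While: "well_typed P PA (join pc (blabel P b)) c \<Longrightarrow> well_typed P PA pc (While b c)"
| ARead: "label_le (join (join pc (alabel P i)) (PA a)) (P x) \<Longrightarrow> well_typed P PA pc (ARead x a i)"
| AWrite: "label_le (join (join pc (alabel P i)) (alabel P e)) (PA a) \<Longrightarrow>
    well_typed P PA pc (AWrite a i e)"

section \<open>The FvSLH transformation\<close>

definition b_eq :: "nat \<Rightarrow> bexp" where
  "b_eq n = BCmp (=) (AId bvar) (ANum n)"

definition band :: "bexp \<Rightarrow> bexp \<Rightarrow> bexp" where
  "band b1 b2 = BOp (\<lambda>bs. bs ! 0 \<and> bs ! 1) [b1, b2]"

definition mask_idx :: "aexp \<Rightarrow> aexp" where
  "mask_idx i = ACTIf (b_eq 1) (ANum 0) i"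

definition guard :: "(vname \<Rightarrow> label) \<Rightarrow> bexp \<Rightarrow> bexp" where
  "guard P be = (if \<not> blabel P be then band (b_eq 0) be else be)"

fun fvslh :: "(vname \<Rightarrow> label) \<Rightarrow> com \<Rightarrow> com" where
  "fvslh P Skip = Skip"
| "fvslh P (Asgn x e) = Asgn x e"
| "fvslh P (Seq c1 c2) = Seq (fvslh P c1) (fvslh P c2)"
| "fvslh P (If be c1 c2) =
     If (guard P be)
        (Seq (Asgn bvar (ACTIf (guard P be) (AId bvar) (ANum 1))) (fvslh P c1))
        (Seq (Asgn bvar (ACTIf (guard P be) (ANum 1) (AId bvar))) (fvslh P c2))"
| "fvslh P (While be c) =
     Seq (While (guard P be) (Seq (Asgn bvar (ACTIf (guard P be) (AId bvar) (ANum 1))) (fvslh P c)))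
         (Asgn bvar (ACTIf (guard P be) (ANum 1) (AId bvar)))"
| "fvslh P (ARead x a i) =
     (if P x \<and> alabel P i then Seq (ARead x a i) (Asgn x (ACTIf (b_eq 1) (ANum 0) (AId x)))
      else if \<not> alabel P i then ARead x a (mask_idx i)
      else ARead x a i)"
| "fvslh P (AWrite a i e) =
     (if \<not> alabel P i then AWrite a (mask_idx i) e else AWrite a i e)"

end

(* Two runs of the hardened program from public-equivalent states are compared in lockstep
   under the same directives. Until a branch is forced, b stays 0, the hardening only adds silent
   updates of b, and each run simulates the source program step for step: the observations agree
   because the source runs are sequentially equivalent, and the typing keeps the states
   public-equivalent. A forced branch happens in both runs at the same command and is followed by
   an assignment setting b to 1. From then on secret guards are conjoined with b == 0, secret
   indices are masked to 0 and public variables read from memory are reset to 0 at once, so every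
   observation is computed from public variables other than b, on which the runs still agree,
   although speculative stores may have made the memories differ. *)

theory Submission
  imports Defs
begin

lemmas seq_step_induct = seq_step.induct[split_format(complete)]
lemmas spec_step_induct = spec_step.induct[split_format(complete)]
lemmas seq_steps_induct = seq_steps.induct[split_format(complete)]

lemma eval_cong:
  "(\<forall>x\<in>avars e. s1 x = s2 x) \<Longrightarrow> aeval s1 e = aeval s2 e"
  "(\<forall>x\<in>bvars b. s1 x = s2 x) \<Longrightarrow> beval s1 b = beval s2 b"
proof (induction e and b)
  case (AOp f es)
  then have "map (aeval s1) es = map (aeval s2) es" by auto
  then show ?case by (metis aeval.simps(3))
next
  case (BOp f bs)
  then have "map (beval s1) bs = map (beval s2) bs" by auto
  then show ?case by (metis beval.simps(4))
qed simp_all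

lemma aeval_pub_equiv: "pub_equiv P s1 s2 \<Longrightarrow> alabel P e \<Longrightarrow> aeval s1 e = aeval s2 e"
  unfolding pub_equiv_def alabel_def by (auto intro: eval_cong)

inductive_cases seq_step_SkipE[elim!]: "seq_step (Skip, s, m) os cfg"
inductive_cases seq_step_AsgnE[elim!]: "seq_step (Asgn x e, s, m) os cfg"
inductive_cases seq_step_IfE[elim!]: "seq_step (If b c1 c2, s, m) os cfg"
inductive_cases seq_step_WhileE[elim!]: "seq_step (While b c, s, m) os cfg"
inductive_cases seq_step_ReadE[elim!]: "seq_step (ARead x a i, s, m) os cfg"
inductive_cases seq_step_WriteE[elim!]: "seq_step (AWrite a i e, s, m) os cfg"

inductive_cases spec_step_SkipE[elim!]: "spec_step (Skip, s, m, \<beta>) ds os cfg"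
inductive_cases spec_step_AsgnE[elim!]: "spec_step (Asgn x e, s, m, \<beta>) ds os cfg"
inductive_cases spec_step_IfE[elim!]: "spec_step (If b c1 c2, s, m, \<beta>) ds os cfg"
inductive_cases spec_step_WhileE[elim!]: "spec_step (While b c, s, m, \<beta>) ds os cfg"
inductive_cases spec_step_ReadE[elim!]: "spec_step (ARead x a i, s, m, \<beta>) ds os cfg"
inductive_cases spec_step_WriteE[elim!]: "spec_step (AWrite a i e, s, m, \<beta>) ds os cfg"

lemma seq_step_SeqE:
  assumes "seq_step (Seq c1 c2, s, m) os (t', s', m')"
  obtains (Step) c1' where "t' = Seq c1' c2" "seq_step (c1, s, m) os (c1', s', m')"
    | (Skip) "c1 = Skip" "t' = c2" "os = []" "s' = s" "m' = m"
  using assms by (cases rule: seq_step.cases) auto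

lemma spec_step_SeqE:
  assumes "spec_step (Seq c1 c2, s, m, \<beta>) ds os (t', s', m', \<beta>')"
  obtains (Step) c1' where "t' = Seq c1' c2" "spec_step (c1, s, m, \<beta>) ds os (c1', s', m', \<beta>')"
    | (Skip) "c1 = Skip" "t' = c2" "ds = []" "os = []" "s' = s" "m' = m" "\<beta>' = \<beta>"
  using assms by (cases rule: spec_step.cases) auto

lemma spec_step_obs_length: "spec_step cfg ds os cfg' \<Longrightarrow> length os = length ds"
  by (induction rule: spec_step.induct) auto

lemma spec_steps_obs_length: "spec_steps cfg ds os cfg' \<Longrightarrow> length os = length ds"
  by (induction rule: spec_steps.induct) (auto dest: spec_step_obs_length)

lemma spec_step_dirs_length:
  "spec_step (t, s1, m1, \<beta>1) ds1 os1 (t1, s1', m1', \<beta>1') \<Longrightarrow>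
   spec_step (t, s2, m2, \<beta>2) ds2 os2 (t2, s2', m2', \<beta>2') \<Longrightarrow> length ds1 = length ds2"
proof (induction arbitrary: s2 m2 \<beta>2 ds2 os2 t2 s2' m2' \<beta>2' rule: spec_step_induct)
  case (Seq c1 s m \<beta> ds os c1' s' m' \<beta>' c2)
  from Seq.prems show ?case
  proof (cases rule: spec_step_SeqE)
    case (Step c1'')
    from Step(2) show ?thesis by (rule Seq.IH)
  next
    case Skip
    then show ?thesis using Seq.hyps by auto
  qed
next
  case (SeqSkip c s m \<beta>)
  from SeqSkip.prems show ?case by (cases rule: spec_step_SeqE) auto
qed auto

lemma spec_step_com_det:
  "spec_step (t, s1, m1, \<beta>1) ds os (t1, s1', m1', \<beta>1') \<Longrightarrow>
   spec_step (t, s2, m2, \<beta>2) ds os (t2, s2', m2', \<beta>2') \<Longrightarrow> t1 = t2"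
proof (induction arbitrary: s2 m2 \<beta>2 t2 s2' m2' \<beta>2' rule: spec_step_induct)
  case (Seq c1 s m \<beta> ds os c1' s' m' \<beta>' c2)
  from Seq.prems show ?case
  proof (cases rule: spec_step_SeqE)
    case (Step c1'')
    then show ?thesis using Seq.IH by simp
  next
    case Skip
    then show ?thesis using Seq.hyps by auto
  qed
next
  case (SeqSkip c s m \<beta>)
  from SeqSkip.prems show ?case by (cases rule: spec_step_SeqE) auto
qed auto

lemma spec_step_flag_mono: "spec_step (t, s, m, \<beta>) ds os (t', s', m', \<beta>') \<Longrightarrow> \<beta> \<Longrightarrow> \<beta>'"
  by (induction rule: spec_step_induct) auto

lemma spec_step_seq_step:
  "spec_step (t, s, m, \<beta>) ds os (t', s', m', \<beta>') \<Longrightarrow> \<not> \<beta> \<Longrightarrow> ds \<noteq> [DForce] \<Longrightarrow>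
   \<not> \<beta>' \<and> seq_step (t, s, m) os (t', s', m')"
proof (induction rule: spec_step_induct)
  case (Seq c1 s m \<beta> ds os c1' s' m' \<beta>' c2)
  then show ?case using seq_step.Seq by blast
next
  case (If b c1 c2 s m \<beta>)
  then show ?case using seq_step.If by blast
qed (simp_all add: seq_step.Asgn seq_step.SeqSkip seq_step.While seq_step.ARead seq_step.AWrite)

lemma spec_step_force:
  "spec_step (t, s, m, \<beta>) ds os (t', s', m', \<beta>') \<Longrightarrow> ds = [DForce] \<Longrightarrow>
   s' = s \<and> m' = m \<and> \<beta>' \<and> (\<exists>u. seq_step (t, s, m) os (u, s, m))"
proof (induction rule: spec_step_induct)
  case (Seq c1 s m \<beta> ds os c1' s' m' \<beta>' c2)
  then show ?case using seq_step.Seq by blast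
next
  case (IfForce b c1 c2 s m \<beta>)
  then show ?case using seq_step.If by blast
qed simp_all

lemma spec_equiv_if_lockstep:
  assumes init: "R cfg1 cfg2"
    and same_com: "\<And>cfg1 cfg2. R cfg1 cfg2 \<Longrightarrow> fst cfg1 = fst cfg2"
    and lockstep: "\<And>cfg1 cfg2 ds os1 os2 cfg1' cfg2'. R cfg1 cfg2 \<Longrightarrow>
      spec_step cfg1 ds os1 cfg1' \<Longrightarrow> spec_step cfg2 ds os2 cfg2' \<Longrightarrow> os1 = os2 \<and> R cfg1' cfg2'"
  shows "spec_equiv cfg1 cfg2"
  unfolding spec_equiv_def
proof (intro allI impI)
  fix D O1 O2 cfg1' cfg2'
  assume "spec_steps cfg1 D O1 cfg1'" "spec_steps cfg2 D O2 cfg2'"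
  then show "O1 = O2" using init
  proof (induction arbitrary: cfg2 O2 rule: spec_steps.induct)
    case (refl cfg)
    then show ?case by (auto dest: spec_steps_obs_length)
  next
    case (step cfg ds os cfg' ds' os' cfg'')
    note first = step.hyps(1) and rest = step.hyps(2) and IH = step.IH and inv = step.prems(2)
    from step.prems(1) show ?case
    proof (cases rule: spec_steps.cases)
      case refl
      then show ?thesis using first rest by (auto dest: spec_step_obs_length spec_steps_obs_length)
    next
      case (step ds2 os2 cfg2m ds2' os2')
      \<comment> \<open>equal commands consume equally many directives, so both runs split D alike\<close>
      have "length ds = length ds2"
        using same_com[OF inv] first \<open>spec_step cfg2 ds2 os2 cfg2m\<close>
        by (cases cfg; cases cfg'; cases cfg2; cases cfg2m) (auto intro: spec_step_dirs_length)
      then have "ds2 = ds" "ds2' = ds'" using \<open>ds @ ds' = ds2 @ ds2'\<close> by auto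
      then have "os = os2" and inv': "R cfg' cfg2m"
        using lockstep[OF inv first] \<open>spec_step cfg2 ds2 os2 cfg2m\<close> by auto
      moreover have "os' = os2'"
        using IH[OF _ inv'] \<open>spec_steps cfg2m ds2' os2' cfg2'\<close> \<open>ds2' = ds'\<close> by simp
      ultimately show ?thesis using \<open>O2 = os2 @ os2'\<close> by simp
    qed
  qed
qed

lemma seq_steps_trans:
  "seq_steps cfg os cfg' \<Longrightarrow> seq_steps cfg' os' cfg'' \<Longrightarrow> seq_steps cfg (os @ os') cfg''"
  by (induction rule: seq_steps.induct) (simp_all add: seq_steps.step)

lemma seq_steps_single: "seq_step cfg os cfg' \<Longrightarrow> seq_steps cfg os cfg'"
  using seq_steps.step[OF _ seq_steps.refl] by fastforce

lemma seq_equiv_steps: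
  assumes eq: "seq_equiv cfg1 cfg2"
    and steps1: "seq_steps cfg1 o1 cfg1'" and steps2: "seq_steps cfg2 o2 cfg2'"
    and "length o1 = length o2"
  shows "o1 = o2 \<and> seq_equiv cfg1' cfg2'"
proof
  have "prefix o1 o2 \<or> prefix o2 o1" using eq steps1 steps2 unfolding seq_equiv_def by blast
  with \<open>length o1 = length o2\<close> show "o1 = o2" by (auto simp: prefix_def)
  show "seq_equiv cfg1' cfg2'" unfolding seq_equiv_def
  proof (intro allI impI)
    fix O1 O2 cfg1'' cfg2''
    assume "seq_steps cfg1' O1 cfg1''" "seq_steps cfg2' O2 cfg2''"
    then have "prefix (o1 @ O1) (o2 @ O2) \<or> prefix (o2 @ O2) (o1 @ O1)"
      using eq seq_steps_trans[OF steps1] seq_steps_trans[OF steps2] unfolding seq_equiv_def by blast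
    then show "prefix O1 O2 \<or> prefix O2 O1" using \<open>o1 = o2\<close> by auto
  qed
qed

lemma seq_steps_Seq:
  "seq_steps (c1, s, m) os (c1', s', m') \<Longrightarrow> seq_steps (Seq c1 c2, s, m) os (Seq c1' c2, s', m')"
  by (induction c1 s m os c1' s' m' rule: seq_steps_induct)
    (auto intro: seq_steps.refl seq_steps.step[OF seq_step.Seq])

lemma seq_step_unused_vars:
  "seq_step (c, s, m) os (c', s', m') \<Longrightarrow>
   used_vars c' \<subseteq> used_vars c \<and> (\<forall>y. y \<notin> used_vars c \<longrightarrow> s' y = s y)"
  by (induction rule: seq_step_induct) auto

lemma seq_steps_unused_vars:
  "seq_steps (c, s, m) os (c', s', m') \<Longrightarrow> y \<notin> used_vars c \<Longrightarrow> y \<notin> used_vars c' \<and> s' y = s y"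
proof (induction c s m os c' s' m' rule: seq_steps_induct)
  case (step c s m os c' s' m' os' c'' s'' m'')
  then show ?case using seq_step_unused_vars[OF step.hyps(1)] by auto
qed simp

text \<open>fvslh writes the numeral 1; rewriting it to Suc 0 would make the abbreviations below
  stop matching the hardened code.\<close>
declare One_nat_def [simp del]

abbreviation b_then :: "bexp \<Rightarrow> com" where
  "b_then G \<equiv> Asgn bvar (ACTIf G (AId bvar) (ANum 1))"

abbreviation b_else :: "bexp \<Rightarrow> com" where
  "b_else G \<equiv> Asgn bvar (ACTIf G (ANum 1) (AId bvar))"

abbreviation mask_exp :: "vname \<Rightarrow> aexp" where
  "mask_exp x \<equiv> ACTIf (b_eq 1) (ANum 0) (AId x)"

abbreviation mask_var :: "vname \<Rightarrow> com" where
  "mask_var x \<equiv> Asgn x (mask_exp x)"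

abbreviation slh_loop :: "(vname \<Rightarrow> label) \<Rightarrow> bexp \<Rightarrow> com \<Rightarrow> com" where
  "slh_loop P be c \<equiv> While (guard P be) (Seq (b_then (guard P be)) (fvslh P c))"

lemma beval_band [simp]: "beval s (band b1 b2) \<longleftrightarrow> beval s b1 \<and> beval s b2"
  by (simp add: band_def)

lemma beval_b_eq [simp]: "beval s (b_eq n) \<longleftrightarrow> s bvar = n"
  by (simp add: b_eq_def)

lemma aeval_mask_idx [simp]: "aeval s (mask_idx i) = (if s bvar = 1 then 0 else aeval s i)"
  by (simp add: mask_idx_def)

lemma beval_guard_b0: "s bvar = 0 \<Longrightarrow> beval s (guard P be) = beval s be"
  by (simp add: guard_def)

definition masked_guard :: "(vname \<Rightarrow> label) \<Rightarrow> bexp \<Rightarrow> bool" where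
  "masked_guard P G \<longleftrightarrow> (blabel P G \<and> bvar \<notin> bvars G) \<or> (\<exists>be. G = band (b_eq 0) be)"

definition masked_index :: "(vname \<Rightarrow> label) \<Rightarrow> aexp \<Rightarrow> bool" where
  "masked_index P i \<longleftrightarrow> (alabel P i \<and> bvar \<notin> avars i) \<or> (\<exists>i'. i = mask_idx i')"

lemma beval_masked_guard:
  "masked_guard P G \<Longrightarrow> s1 bvar = 1 \<Longrightarrow> s2 bvar = 1 \<Longrightarrow>
   \<forall>y. P y \<longrightarrow> y \<noteq> bvar \<longrightarrow> s1 y = s2 y \<Longrightarrow> beval s1 G = beval s2 G"
  unfolding masked_guard_def blabel_def
  by (elim disjE exE conjE) (rule eval_cong, blast, simp)

lemma aeval_masked_index:
  "masked_index P i \<Longrightarrow> s1 bvar = 1 \<Longrightarrow> s2 bvar = 1 \<Longrightarrow>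
   \<forall>y. P y \<longrightarrow> y \<noteq> bvar \<longrightarrow> s1 y = s2 y \<Longrightarrow> aeval s1 i = aeval s2 i"
  unfolding masked_index_def alabel_def
  by (elim disjE exE conjE) (rule eval_cong, blast, simp)

fun secure_updates :: "(vname \<Rightarrow> label) \<Rightarrow> (aname \<Rightarrow> label) \<Rightarrow> com \<Rightarrow> bool" where
  "secure_updates P PA Skip = True"
| "secure_updates P PA (Asgn x e) =
     (if x = bvar then \<exists>G. e = ACTIf G (AId bvar) (ANum 1) \<or> e = ACTIf G (ANum 1) (AId bvar)
      else P x \<longrightarrow> (alabel P e \<and> bvar \<notin> avars e) \<or> e = mask_exp x)"
| "secure_updates P PA (Seq t1 t2) = (secure_updates P PA t1 \<and> secure_updates P PA t2)"
| "secure_updates P PA (If G t1 t2) = (secure_updates P PA t1 \<and> secure_updates P PA t2)"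
| "secure_updates P PA (While G t) = secure_updates P PA t"
| "secure_updates P PA (ARead x a i) = (x \<noteq> bvar \<and> (P x \<longrightarrow> PA a \<and> alabel P i))"
| "secure_updates P PA (AWrite a i e) = (PA a \<longrightarrow> alabel P i \<and> alabel P e)"

fun masked_observations :: "(vname \<Rightarrow> label) \<Rightarrow> com \<Rightarrow> bool" where
  "masked_observations P (Seq t1 t2) = (masked_observations P t1 \<and> masked_observations P t2)"
| "masked_observations P (If G t1 t2) =
     (masked_guard P G \<and> masked_observations P t1 \<and> masked_observations P t2)"
| "masked_observations P (While G t) = (masked_guard P G \<and> masked_observations P t)"
| "masked_observations P (ARead x a i) = masked_index P i"
| "masked_observations P (AWrite a i e) = masked_index P i"
| "masked_observations P _ = True"

fun public_reads_masked :: "(vname \<Rightarrow> label) \<Rightarrow> com \<Rightarrow> bool" where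
  "public_reads_masked P (Seq (ARead x a i) t2) =
     ((P x \<longrightarrow> t2 = mask_var x) \<and> public_reads_masked P t2)"
| "public_reads_masked P (Seq t1 t2) = (public_reads_masked P t1 \<and> public_reads_masked P t2)"
| "public_reads_masked P (If G t1 t2) = (public_reads_masked P t1 \<and> public_reads_masked P t2)"
| "public_reads_masked P (While G t) = public_reads_masked P t"
| "public_reads_masked P (ARead x a i) = (\<not> P x)"
| "public_reads_masked P _ = True"

lemma public_reads_masked_SeqI:
  "public_reads_masked P t1 \<Longrightarrow> public_reads_masked P t2 \<Longrightarrow> public_reads_masked P (Seq t1 t2)"
  by (cases t1) auto

lemma public_reads_masked_SeqD:
  "public_reads_masked P (Seq t1 t2) \<Longrightarrow> public_reads_masked P t2"
  "public_reads_masked P (Seq t1 t2) \<Longrightarrow> \<forall>x a i. t1 \<noteq> ARead x a i \<Longrightarrow> public_reads_masked P t1"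
  by (cases t1; auto)+

fun pending_mask :: "com \<Rightarrow> vname set" where
  "pending_mask (Asgn x e) = (if e = mask_exp x then {x} else {})"
| "pending_mask (Seq t1 t2) = (if t1 = Skip then pending_mask t2 else pending_mask t1)"
| "pending_mask _ = {}"

text \<open>A public variable just loaded from a possibly corrupted array differs between the runs
  until the following mask_var resets it.\<close>
definition spec_pub_equiv :: "(vname \<Rightarrow> label) \<Rightarrow> state \<Rightarrow> state \<Rightarrow> com \<Rightarrow> bool" where
  "spec_pub_equiv P s1 s2 t \<longleftrightarrow>
     (\<forall>y. P y \<longrightarrow> y \<noteq> bvar \<longrightarrow> y \<notin> pending_mask t \<longrightarrow> s1 y = s2 y)"

inductive pending_b_update :: "state \<Rightarrow> com \<Rightarrow> bool" where
  b_then: "\<not> beval s G \<Longrightarrow> pending_b_update s (b_then G)"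
| b_else: "beval s G \<Longrightarrow> pending_b_update s (b_else G)"
| SeqSkip: "pending_b_update s t \<Longrightarrow> pending_b_update s (Seq Skip t)"
| Seq: "pending_b_update s t1 \<Longrightarrow> pending_b_update s (Seq t1 t2)"

inductive_cases pending_b_update_SkipE [elim!]: "pending_b_update s Skip"
inductive_cases pending_b_update_SeqE: "pending_b_update s (Seq t1 t2)"
inductive_cases pending_b_update_IfE [elim!]: "pending_b_update s (If G t1 t2)"
inductive_cases pending_b_update_WhileE [elim!]: "pending_b_update s (While G t)"
inductive_cases pending_b_update_ReadE [elim!]: "pending_b_update s (ARead x a i)"
inductive_cases pending_b_update_WriteE [elim!]: "pending_b_update s (AWrite a i e)"
inductive_cases pending_b_update_AsgnE: "pending_b_update s (Asgn x e)"

lemma pending_b_update_step: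
  "pending_b_update s t \<Longrightarrow> spec_step (t, s, m, \<beta>) ds os (t', s', m', \<beta>') \<Longrightarrow> s bvar = 0 \<Longrightarrow>
   ds = [] \<and> os = [] \<and> (s' = s(bvar := 1) \<or> (s' = s \<and> pending_b_update s' t'))"
proof (induction arbitrary: t' s' m' \<beta>' ds os rule: pending_b_update.induct)
  case (SeqSkip s t)
  from SeqSkip.prems(1) show ?case by (cases rule: spec_step_SeqE) (use SeqSkip.hyps in auto)
next
  case (Seq s t1 t2)
  from Seq.prems(1) show ?case
  proof (cases rule: spec_step_SeqE)
    case (Step t1')
    then show ?thesis using Seq.IH[OF Step(2) Seq.prems(2)] by (auto intro: pending_b_update.Seq)
  next
    case Skip
    then show ?thesis using Seq.hyps by auto
  qed
qed auto

definition b_set_or_pending :: "state \<Rightarrow> com \<Rightarrow> bool" where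
  "b_set_or_pending s t \<longleftrightarrow> s bvar = 1 \<or> (s bvar = 0 \<and> pending_b_update s t)"

lemma b_set_step:
  "spec_step (t, s, m, \<beta>) ds os (t', s', m', \<beta>') \<Longrightarrow> secure_updates P PA t \<Longrightarrow>
   s bvar = 1 \<Longrightarrow> s' bvar = 1"
  by (induction rule: spec_step_induct) (auto split: if_splits)

lemma b_set_or_pending_step:
  assumes "spec_step (t, s, m, \<beta>) ds os (t', s', m', \<beta>')" "secure_updates P PA t"
    and "b_set_or_pending s t"
  shows "b_set_or_pending s' t'"
  using assms b_set_step[OF assms(1,2)] pending_b_update_step[OF _ assms(1)]
  unfolding b_set_or_pending_def by fastforce

lemma b_set_or_pending_SeqD: "b_set_or_pending s (Seq t1 t2) \<Longrightarrow> t1 \<noteq> Skip \<Longrightarrow> b_set_or_pending s t1"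
  unfolding b_set_or_pending_def by (auto elim: pending_b_update_SeqE)

lemma secure_updates_step:
  "spec_step (t, s, m, \<beta>) ds os (t', s', m', \<beta>') \<Longrightarrow> secure_updates P PA t \<Longrightarrow> secure_updates P PA t'"
  by (induction rule: spec_step_induct) auto

lemma masked_observations_step:
  "spec_step (t, s, m, \<beta>) ds os (t', s', m', \<beta>') \<Longrightarrow> masked_observations P t \<Longrightarrow>
   masked_observations P t'"
  by (induction rule: spec_step_induct) auto

lemma public_reads_masked_step:
  "spec_step (t, s, m, \<beta>) ds os (t', s', m', \<beta>') \<Longrightarrow> public_reads_masked P t \<Longrightarrow>
   public_reads_masked P t'"
proof (induction rule: spec_step_induct)
  case (Seq c1 s m \<beta> ds os c1' s' m' \<beta>' c2)
  have "public_reads_masked P c1'"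
  proof (cases "\<exists>x a i. c1 = ARead x a i")
    case True
    with Seq.hyps show ?thesis by auto
  next
    case False
    with Seq.IH public_reads_masked_SeqD(2)[OF Seq.prems] show ?thesis by blast
  qed
  moreover have "public_reads_masked P c2" using public_reads_masked_SeqD(1)[OF Seq.prems] .
  ultimately show ?case by (rule public_reads_masked_SeqI)
next
  case (SeqSkip c s m \<beta>)
  then show ?case using public_reads_masked_SeqD(1) by blast
next
  case (While b c s m \<beta>)
  then show ?case by (simp add: public_reads_masked_SeqI)
qed simp_all

lemma b_set_or_pending_If: "b_set_or_pending s (If G t1 t2) \<Longrightarrow> s bvar = 1"
  and b_set_or_pending_ARead: "b_set_or_pending s (ARead x a i) \<Longrightarrow> s bvar = 1"
  and b_set_or_pending_AWrite: "b_set_or_pending s (AWrite a i e) \<Longrightarrow> s bvar = 1"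
  by (auto simp: b_set_or_pending_def)

text \<open>Once b is set, masked guards and indices only depend on public variables other than b.\<close>
lemma spec_step_obs_eq:
  "spec_step (t, s1, m1, \<beta>1) ds os1 (t1', s1', m1', \<beta>1') \<Longrightarrow>
   spec_step (t, s2, m2, \<beta>2) ds os2 (t2', s2', m2', \<beta>2') \<Longrightarrow>
   masked_observations P t \<Longrightarrow> b_set_or_pending s1 t \<Longrightarrow> b_set_or_pending s2 t \<Longrightarrow>
   spec_pub_equiv P s1 s2 t \<Longrightarrow> os1 = os2"
proof (induction arbitrary: s2 m2 \<beta>2 os2 t2' s2' m2' \<beta>2' rule: spec_step_induct)
  case (Seq c1 s m \<beta> ds os c1' s' m' \<beta>' c2)
  have "c1 \<noteq> Skip" using Seq.hyps by auto
  from Seq.prems(1) show ?case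
  proof (cases rule: spec_step_SeqE)
    case (Step c1'')
    show ?thesis
      by (rule Seq.IH[OF Step(2)])
        (use Seq.prems \<open>c1 \<noteq> Skip\<close> b_set_or_pending_SeqD in \<open>auto simp: spec_pub_equiv_def\<close>)
  qed (use \<open>c1 \<noteq> Skip\<close> in simp)
next
  case (If G c1 c2 s m \<beta>)
  then show ?case using beval_masked_guard[of P G s s2] b_set_or_pending_If
    by (auto simp: spec_pub_equiv_def)
next
  case (IfForce G c1 c2 s m \<beta>)
  then show ?case using beval_masked_guard[of P G s s2] b_set_or_pending_If
    by (auto simp: spec_pub_equiv_def)
next
  case (ARead s ie i m a x \<beta>)
  then show ?case using aeval_masked_index[of P ie s s2] b_set_or_pending_ARead
    by (auto simp: spec_pub_equiv_def)
next
  case (ALoad s ie i m a j a' x)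
  then show ?case using aeval_masked_index[of P ie s s2] b_set_or_pending_ARead
    by (auto simp: spec_pub_equiv_def)
next
  case (AWrite s ie i m a e \<beta>)
  then show ?case using aeval_masked_index[of P ie s s2] b_set_or_pending_AWrite
    by (auto simp: spec_pub_equiv_def)
next
  case (AStore s ie i m a j a' e)
  then show ?case using aeval_masked_index[of P ie s s2] b_set_or_pending_AWrite
    by (auto simp: spec_pub_equiv_def)
qed (auto dest: spec_step_obs_length)

lemma spec_pub_equiv_Asgn:
  assumes updates: "secure_updates P PA (Asgn x e)"
    and b1: "b_set_or_pending s1 (Asgn x e)" and b2: "b_set_or_pending s2 (Asgn x e)"
    and equiv: "spec_pub_equiv P s1 s2 (Asgn x e)"
  shows "spec_pub_equiv P (s1(x := aeval s1 e)) (s2(x := aeval s2 e)) Skip"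
proof (cases "x = bvar \<or> \<not> P x")
  case True
  then show ?thesis using equiv unfolding spec_pub_equiv_def by auto
next
  case False
  then have "x \<noteq> bvar" "P x" by auto
  have "s1 bvar = 1" "s2 bvar = 1"
    using b1 b2 \<open>x \<noteq> bvar\<close> unfolding b_set_or_pending_def by (auto elim: pending_b_update_AsgnE)
  consider "e = mask_exp x" | "alabel P e" "bvar \<notin> avars e" "e \<noteq> mask_exp x"
    using updates \<open>x \<noteq> bvar\<close> \<open>P x\<close> by auto
  then have "aeval s1 e = aeval s2 e"
  proof cases
    case 1
    then show ?thesis using \<open>s1 bvar = 1\<close> \<open>s2 bvar = 1\<close> by simp
  next
    case 2
    with equiv show ?thesis unfolding spec_pub_equiv_def alabel_def by (auto intro: eval_cong)
  qed
  then show ?thesis using equiv unfolding spec_pub_equiv_def by auto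
qed

lemma spec_pub_equiv_step:
  "spec_step (t, s1, m1, \<beta>1) ds os1 (t', s1', m1', \<beta>1') \<Longrightarrow>
   spec_step (t, s2, m2, \<beta>2) ds os2 (t', s2', m2', \<beta>2') \<Longrightarrow>
   secure_updates P PA t \<Longrightarrow> public_reads_masked P t \<Longrightarrow>
   b_set_or_pending s1 t \<Longrightarrow> b_set_or_pending s2 t \<Longrightarrow>
   spec_pub_equiv P s1 s2 t \<Longrightarrow> spec_pub_equiv P s1' s2' t'"
proof (induction arbitrary: s2 m2 \<beta>2 os2 s2' m2' \<beta>2' rule: spec_step_induct)
  case (Asgn x e s m \<beta>)
  from Asgn.prems(1) have "s2' = s2(x := aeval s2 e)" by auto
  then show ?case using spec_pub_equiv_Asgn[OF Asgn.prems(2,4,5,6)] by (simp only:)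
next
  case (Seq c1 s m \<beta> ds os c1' s' m' \<beta>' c2)
  have "c1 \<noteq> Skip" using Seq.hyps by auto
  from Seq.prems(1) show ?case
  proof (cases rule: spec_step_SeqE)
    case (Step c1'')
    show ?thesis
    proof (cases "\<exists>x a i. c1 = ARead x a i \<and> P x")
      case True
      then obtain x a i where "c1 = ARead x a i" "P x" by blast
      with Seq.prems(3) Seq.hyps Step show ?thesis
        using Seq.prems(6) unfolding spec_pub_equiv_def by auto
    next
      case False
      then have "public_reads_masked P c1"
        using public_reads_masked_SeqD(2)[OF Seq.prems(3)] by (cases c1) auto
      moreover have "spec_pub_equiv P s s2 c1"
        using Seq.prems(6) \<open>c1 \<noteq> Skip\<close> unfolding spec_pub_equiv_def by simp
      ultimately have "spec_pub_equiv P s' s2' c1'"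
        using Seq.IH Step Seq.prems(2,4,5) \<open>c1 \<noteq> Skip\<close> b_set_or_pending_SeqD by auto
      then show ?thesis unfolding spec_pub_equiv_def by (auto split: if_splits)
    qed
  qed (use \<open>c1 \<noteq> Skip\<close> in simp)
next
  case (SeqSkip c s m \<beta>)
  then show ?case unfolding spec_pub_equiv_def by (auto elim: spec_step_SeqE)
qed (auto simp: spec_pub_equiv_def)

text \<open>The residue t of the hardened program runs like the source residue c, up to silent
  assignments that keep b = 0; the state only records which guards of these assignments hold.\<close>
inductive slh_sim :: "(vname \<Rightarrow> label) \<Rightarrow> state \<Rightarrow> com \<Rightarrow> com \<Rightarrow> bool" for P where
  Skip: "slh_sim P s Skip Skip"
| Asgn: "slh_sim P s (Asgn x e) (Asgn x e)"
| If: "slh_sim P s (fvslh P (If be c1 c2)) (If be c1 c2)"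
| While: "slh_sim P s (fvslh P (While be c)) (While be c)"
| ARead: "slh_sim P s (fvslh P (ARead x a i)) (ARead x a i)"
| AWrite: "slh_sim P s (fvslh P (AWrite a i e)) (AWrite a i e)"
| b_then: "beval s G \<Longrightarrow> slh_sim P s t c \<Longrightarrow> slh_sim P s (Seq (b_then G) t) c"
| b_else: "\<not> beval s G \<Longrightarrow> slh_sim P s t c \<Longrightarrow> slh_sim P s (Seq (b_else G) t) c"
| SeqSkip: "slh_sim P s t c \<Longrightarrow> slh_sim P s (Seq Skip t) c"
| Seq: "slh_sim P s t1 c1 \<Longrightarrow> slh_sim P s (Seq t1 (fvslh P c2)) (Seq c1 c2)"
| loop_unfolded: "slh_sim P s
    (Seq (If (guard P be) (Seq (Seq (b_then (guard P be)) (fvslh P c)) (slh_loop P be c)) Skip)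
         (b_else (guard P be)))
    (If be (Seq c (While be c)) Skip)"
| loop_body: "slh_sim P s t c1 \<Longrightarrow>
    slh_sim P s (Seq (Seq t (slh_loop P be c)) (b_else (guard P be))) (Seq c1 (While be c))"
| loop_exit: "\<not> beval s G \<Longrightarrow> slh_sim P s (b_else G) Skip"
| mask: "slh_sim P s (mask_var x) Skip"

lemma slh_sim_fvslh: "slh_sim P s (fvslh P c) c"
proof (induction c)
  case (Seq c1 c2)
  then show ?case using slh_sim.Seq[of P s "fvslh P c1" c1 c2] by simp
qed (simp_all only: fvslh.simps(1,2) slh_sim.Skip slh_sim.Asgn slh_sim.If slh_sim.While
    slh_sim.ARead slh_sim.AWrite)

lemma slh_sim_SkipD: "slh_sim P s Skip c \<Longrightarrow> c = Skip"
  by (erule slh_sim.cases) (auto split: if_splits)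

lemma slh_sim_step_If:
  assumes "seq_step (fvslh P (If be c1 c2), s, m) ob (t', s', m')" and "s bvar = 0"
  shows "\<exists>c'. seq_steps (If be c1 c2, s, m) ob (c', s', m') \<and> slh_sim P s' t' c'"
proof -
  have guard: "beval s (guard P be) = beval s be" using beval_guard_b0 assms(2) .
  then have "slh_sim P s
      (if beval s be then Seq (b_then (guard P be)) (fvslh P c1)
       else Seq (b_else (guard P be)) (fvslh P c2))
      (if beval s be then c1 else c2)"
    by (auto intro: slh_sim.b_then slh_sim.b_else slh_sim_fvslh)
  moreover have
    "seq_steps (If be c1 c2, s, m) [OBranch (beval s be)] (if beval s be then c1 else c2, s, m)"
    by (rule seq_steps_single[OF seq_step.If])
  ultimately show ?thesis using assms(1) guard by auto
qed

lemma slh_sim_step_loop_unfolded: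
  assumes "seq_step (Seq (If (guard P be) (Seq (Seq (b_then (guard P be)) (fvslh P c))
      (slh_loop P be c)) Skip) (b_else (guard P be)), s, m) ob (t', s', m')" and "s bvar = 0"
  shows "\<exists>c'. seq_steps (If be (Seq c (While be c)) Skip, s, m) ob (c', s', m') \<and> slh_sim P s' t' c'"
proof -
  have guard: "beval s (guard P be) = beval s be" using beval_guard_b0 assms(2) .
  then have "slh_sim P s
      (Seq (if beval s be then Seq (Seq (b_then (guard P be)) (fvslh P c)) (slh_loop P be c)
           else Skip) (b_else (guard P be)))
      (if beval s be then Seq c (While be c) else Skip)"
    using slh_sim.loop_body[OF slh_sim.b_then[OF _ slh_sim_fvslh]]
      slh_sim.SeqSkip[OF slh_sim.loop_exit]
    by simp
  moreover have "seq_steps (If be (Seq c (While be c)) Skip, s, m) [OBranch (beval s be)]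
      (if beval s be then Seq c (While be c) else Skip, s, m)"
    by (rule seq_steps_single[OF seq_step.If])
  moreover from assms(1) have "t' = Seq (if beval s be
        then Seq (Seq (b_then (guard P be)) (fvslh P c)) (slh_loop P be c) else Skip)
      (b_else (guard P be))"
      "ob = [OBranch (beval s be)]" "s' = s" "m' = m"
    by (cases rule: seq_step_SeqE; use guard in auto)+
  ultimately show ?thesis by auto
qed

lemma slh_sim_step_While:
  assumes "seq_step (fvslh P (While be c), s, m) ob (t', s', m')"
  shows "\<exists>c'. seq_steps (While be c, s, m) ob (c', s', m') \<and> slh_sim P s' t' c'"
proof -
  from assms have "seq_step (Seq (slh_loop P be c) (b_else (guard P be)), s, m) ob (t', s', m')"
    by simp
  then have "t' = Seq (If (guard P be) (Seq (Seq (b_then (guard P be)) (fvslh P c))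
      (slh_loop P be c)) Skip) (b_else (guard P be))" "ob = []" "s' = s" "m' = m"
    by (cases rule: seq_step_SeqE; auto)+
  then show ?thesis using seq_steps_single[OF seq_step.While] slh_sim.loop_unfolded by blast
qed

lemma slh_sim_step_ARead:
  assumes "seq_step (fvslh P (ARead x a i), s, m) ob (t', s', m')" and "s bvar = 0"
  shows "\<exists>c'. seq_steps (ARead x a i, s, m) ob (c', s', m') \<and> slh_sim P s' t' c'"
proof (cases "P x \<and> alabel P i")
  case True
  with assms(1) show ?thesis
    by (auto elim!: seq_step_SeqE intro: seq_steps_single seq_step.ARead slh_sim.SeqSkip slh_sim.mask)
next
  case False
  with assms show ?thesis
    by (auto split: if_splits intro!: exI[of _ Skip] seq_steps_single seq_step.ARead slh_sim.Skip)
qed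

lemma slh_sim_step_AWrite:
  assumes "seq_step (fvslh P (AWrite a i e), s, m) ob (t', s', m')" and "s bvar = 0"
  shows "\<exists>c'. seq_steps (AWrite a i e, s, m) ob (c', s', m') \<and> slh_sim P s' t' c'"
  using assms
  by (auto split: if_splits intro!: exI[of _ Skip] seq_steps_single seq_step.AWrite slh_sim.Skip)

lemma slh_sim_step_Seq:
  assumes IH: "\<And>ob t1' s' m'. seq_step (t1, s, m) ob (t1', s', m') \<Longrightarrow>
      \<exists>c1'. seq_steps (c1, s, m) ob (c1', s', m') \<and> slh_sim P s' t1' c1'"
    and sim: "slh_sim P s t1 c1"
    and step: "seq_step (Seq t1 (fvslh P c2), s, m) ob (t', s', m')"
  shows "\<exists>c'. seq_steps (Seq c1 c2, s, m) ob (c', s', m') \<and> slh_sim P s' t' c'"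
  using step
proof (cases rule: seq_step_SeqE)
  case (Step t1')
  then show ?thesis using IH by (blast intro: seq_steps_Seq slh_sim.Seq)
next
  case Skip
  then have "c1 = Skip" using sim slh_sim_SkipD by blast
  with Skip show ?thesis using seq_steps_single[OF seq_step.SeqSkip] slh_sim_fvslh by blast
qed

lemma slh_sim_step_loop_body:
  assumes IH: "\<And>ob t1' s' m'. seq_step (t1, s, m) ob (t1', s', m') \<Longrightarrow>
      \<exists>c1'. seq_steps (c1, s, m) ob (c1', s', m') \<and> slh_sim P s' t1' c1'"
    and sim: "slh_sim P s t1 c1"
    and step: "seq_step (Seq (Seq t1 (slh_loop P be c)) (b_else (guard P be)), s, m) ob (t', s', m')"
  shows "\<exists>c'. seq_steps (Seq c1 (While be c), s, m) ob (c', s', m') \<and> slh_sim P s' t' c'"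
proof -
  from step obtain u where u: "seq_step (Seq t1 (slh_loop P be c), s, m) ob (u, s', m')"
    and t': "t' = Seq u (b_else (guard P be))"
    by (cases rule: seq_step_SeqE) auto
  from u show ?thesis
  proof (cases rule: seq_step_SeqE)
    case (Step t1')
    then show ?thesis using IH t' by (blast intro: seq_steps_Seq slh_sim.loop_body)
  next
    case Skip
    then have "c1 = Skip" using sim slh_sim_SkipD by blast
    moreover have "slh_sim P s t' (While be c)"
      using slh_sim_fvslh[of P s "While be c"] t' Skip by simp
    ultimately show ?thesis using Skip seq_steps_single[OF seq_step.SeqSkip] by blast
  qed
qed

lemma slh_sim_step:
  "slh_sim P s t c \<Longrightarrow> seq_step (t, s, m) ob (t', s', m') \<Longrightarrow> s bvar = 0 \<Longrightarrow>
   \<exists>c'. seq_steps (c, s, m) ob (c', s', m') \<and> slh_sim P s' t' c'"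
proof (induction arbitrary: ob t' s' m' rule: slh_sim.induct)
  case (Asgn s x e)
  then show ?case using seq_steps_single[OF seq_step.Asgn] slh_sim.Skip by blast
next
  case (If s be c1 c2)
  then show ?case by (rule slh_sim_step_If)
next
  case (While s be c)
  then show ?case by (intro slh_sim_step_While)
next
  case (ARead s x a i)
  then show ?case by (rule slh_sim_step_ARead)
next
  case (AWrite s a i e)
  then show ?case by (rule slh_sim_step_AWrite)
next
  case (Seq s t1 c1 c2)
  then show ?case by (intro slh_sim_step_Seq)
next
  case (loop_unfolded s be c)
  then show ?case by (rule slh_sim_step_loop_unfolded)
next
  case (loop_body s t c1 be c)
  then show ?case by (intro slh_sim_step_loop_body)
qed (fastforce elim!: seq_step_SeqE simp: fun_upd_idem intro: seq_steps.refl slh_sim.intros)+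

lemma slh_sim_force:
  "slh_sim P s t c \<Longrightarrow> spec_step (t, s, m, \<beta>) ds os (t', s', m', \<beta>') \<Longrightarrow> ds = [DForce] \<Longrightarrow>
   pending_b_update s t'"
proof (induction arbitrary: t' s' m' \<beta>' ds os rule: slh_sim.induct)
  case (If s be c1 c2)
  then show ?case
    by (cases "beval s (guard P be)")
      (auto simp: pending_b_update.Seq[OF pending_b_update.b_then]
        pending_b_update.Seq[OF pending_b_update.b_else])
next
  case (Seq s t1 c1 c2)
  from Seq.prems(1) show ?case
    by (cases rule: spec_step_SeqE) (use Seq in \<open>auto intro: pending_b_update.Seq\<close>)
next
  case (loop_unfolded s be c)
  then show ?case
    by (cases "beval s (guard P be)")
      (auto elim!: spec_step_SeqE simp: pending_b_update.SeqSkip[OF pending_b_update.b_else]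
        pending_b_update.Seq[OF pending_b_update.Seq[OF
          pending_b_update.Seq[OF pending_b_update.b_then]]])
next
  case (loop_body s t c1 be c)
  from loop_body.prems obtain t1' where
    "t' = Seq (Seq t1' (slh_loop P be c)) (b_else (guard P be))"
    "spec_step (t, s, m, \<beta>) ds os (t1', s', m', \<beta>')"
    by (auto elim!: spec_step_SeqE)
  with loop_body.IH loop_body.prems(2) show ?case by (blast intro: pending_b_update.Seq)
qed (auto elim!: spec_step_SeqE split: if_splits)

lemma pub_equiv_update:
  "pub_equiv P s1 s2 \<Longrightarrow> (P x \<Longrightarrow> v1 = v2) \<Longrightarrow> pub_equiv P (s1(x := v1)) (s2(x := v2))"
  unfolding pub_equiv_def by auto

lemma pub_equiv_mem_update:
  "pub_equiv_mem PA m1 m2 \<Longrightarrow> (PA a \<Longrightarrow> v1 = v2) \<Longrightarrow> pub_equiv_mem PA (m1(a := v1)) (m2(a := v2))"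
  unfolding pub_equiv_mem_def by auto

lemma seq_step_pub_equiv:
  "seq_step (t, s1, m1) o1 (t1', s1', m1') \<Longrightarrow> seq_step (t, s2, m2) o2 (t2', s2', m2') \<Longrightarrow>
   secure_updates P PA t \<Longrightarrow> pub_equiv P s1 s2 \<Longrightarrow> pub_equiv_mem PA m1 m2 \<Longrightarrow>
   s1 bvar = 0 \<Longrightarrow> s2 bvar = 0 \<Longrightarrow> s1' bvar = 0 \<Longrightarrow> s2' bvar = 0 \<Longrightarrow> pub_equiv P s1' s2'"
proof (induction arbitrary: o2 t2' s2' m2' rule: seq_step_induct)
  case (Asgn x e s m)
  from Asgn.prems(1) have s2': "s2' = s2(x := aeval s2 e)" by auto
  have "aeval s e = aeval s2 e" if "P x"
  proof (cases "x = bvar")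
    case True
    then show ?thesis using Asgn.prems(7,8) s2' by simp
  next
    case False
    then show ?thesis
      using Asgn.prems(2,3,5,6) \<open>P x\<close> aeval_pub_equiv unfolding pub_equiv_def by fastforce
  qed
  then show ?case using pub_equiv_update[OF Asgn.prems(3)] s2' by (simp add: fun_upd_def)
next
  case (Seq c1 s m os c1' s' m' c2)
  from Seq.prems(1) show ?case
    by (cases rule: seq_step_SeqE) (use Seq in auto)
next
  case (ARead s ie i m a x)
  from ARead.prems(1) obtain i2 where "s2' = s2(x := m2 a ! i2)" "aeval s2 ie = i2" by auto
  moreover have "P x \<Longrightarrow> m a ! i = m2 a ! i2"
    using ARead.prems(2-4) ARead.hyps calculation(2) aeval_pub_equiv
    unfolding pub_equiv_mem_def by fastforce
  ultimately show ?case using pub_equiv_update[OF ARead.prems(3)] by (simp add: fun_upd_def)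
qed (auto elim: seq_step_SeqE)

lemma seq_step_pub_equiv_mem:
  "seq_step (t, s1, m1) o1 (t1', s1', m1') \<Longrightarrow> seq_step (t, s2, m2) o2 (t2', s2', m2') \<Longrightarrow>
   secure_updates P PA t \<Longrightarrow> pub_equiv P s1 s2 \<Longrightarrow> pub_equiv_mem PA m1 m2 \<Longrightarrow>
   pub_equiv_mem PA m1' m2'"
proof (induction arbitrary: o2 t2' s2' m2' rule: seq_step_induct)
  case (Seq c1 s m os c1' s' m' c2)
  from Seq.prems(1) show ?case
    by (cases rule: seq_step_SeqE) (use Seq in auto)
next
  case (AWrite s ie i m a e)
  from AWrite.prems(1) obtain i2 where "m2' = m2(a := (m2 a)[i2 := aeval s2 e])" "aeval s2 ie = i2"
    by auto
  moreover have "PA a \<Longrightarrow> (m a)[i := aeval s e] = (m2 a)[i2 := aeval s2 e]"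
    using AWrite.prems(2-4) AWrite.hyps calculation(2) aeval_pub_equiv
    unfolding pub_equiv_mem_def by fastforce
  ultimately show ?case using pub_equiv_mem_update[OF AWrite.prems(4)] by (simp add: fun_upd_def)
qed (auto elim: seq_step_SeqE)

definition slh_shape :: "(vname \<Rightarrow> label) \<Rightarrow> (aname \<Rightarrow> label) \<Rightarrow> com \<Rightarrow> bool" where
  "slh_shape P PA t \<longleftrightarrow> secure_updates P PA t \<and> masked_observations P t \<and> public_reads_masked P t"

lemma slh_shape_step:
  "spec_step (t, s, m, \<beta>) ds os (t', s', m', \<beta>') \<Longrightarrow> slh_shape P PA t \<Longrightarrow> slh_shape P PA t'"
  unfolding slh_shape_def
  by (metis secure_updates_step masked_observations_step public_reads_masked_step)

lemma slh_shape_fvslh: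
  "well_typed P PA pc c \<Longrightarrow> bvar \<notin> used_vars c \<Longrightarrow> slh_shape P PA (fvslh P c)"
  unfolding slh_shape_def
proof (induction rule: well_typed.induct)
  case (Seq P PA pc c1 c2)
  then show ?case using public_reads_masked_SeqI by auto
qed (auto simp: label_le_def join_def masked_guard_def masked_index_def guard_def blabel_def)

definition seq_phase_inv ::
  "(vname \<Rightarrow> label) \<Rightarrow> (aname \<Rightarrow> label) \<Rightarrow> com \<Rightarrow> state \<Rightarrow> mem \<Rightarrow> state \<Rightarrow> mem \<Rightarrow> bool" where
  "seq_phase_inv P PA t s1 m1 s2 m2 \<longleftrightarrow>
     slh_shape P PA t \<and> s1 bvar = 0 \<and> s2 bvar = 0 \<and> pub_equiv P s1 s2 \<and> pub_equiv_mem PA m1 m2 \<and>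
     (\<exists>c1 c2. slh_sim P s1 t c1 \<and> slh_sim P s2 t c2 \<and> bvar \<notin> used_vars c1 \<and> bvar \<notin> used_vars c2 \<and>
        seq_equiv (c1, s1, m1) (c2, s2, m2))"

definition spec_phase_inv :: "(vname \<Rightarrow> label) \<Rightarrow> (aname \<Rightarrow> label) \<Rightarrow> com \<Rightarrow> state \<Rightarrow> state \<Rightarrow> bool" where
  "spec_phase_inv P PA t s1 s2 \<longleftrightarrow>
     slh_shape P PA t \<and> b_set_or_pending s1 t \<and> b_set_or_pending s2 t \<and> spec_pub_equiv P s1 s2 t"

fun slh_inv ::
  "(vname \<Rightarrow> label) \<Rightarrow> (aname \<Rightarrow> label) \<Rightarrow> com \<times> state \<times> mem \<times> bool \<Rightarrow> com \<times> state \<times> mem \<times> bool \<Rightarrow> bool"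
where
  "slh_inv P PA (t1, s1, m1, \<beta>1) (t2, s2, m2, \<beta>2) \<longleftrightarrow> t1 = t2 \<and> \<beta>1 = \<beta>2 \<and>
     (if \<beta>1 then spec_phase_inv P PA t1 s1 s2 else seq_phase_inv P PA t1 s1 m1 s2 m2)"

lemma spec_phase_step:
  assumes inv: "spec_phase_inv P PA t s1 s2"
    and step1: "spec_step (t, s1, m1, True) ds os1 (t1', s1', m1', \<beta>1')"
    and step2: "spec_step (t, s2, m2, True) ds os2 (t2', s2', m2', \<beta>2')"
  shows "os1 = os2 \<and> slh_inv P PA (t1', s1', m1', \<beta>1') (t2', s2', m2', \<beta>2')"
proof -
  have shape: "slh_shape P PA t" and b1: "b_set_or_pending s1 t" and b2: "b_set_or_pending s2 t"
    and equiv: "spec_pub_equiv P s1 s2 t"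
    using inv unfolding spec_phase_inv_def by auto
  then have "os1 = os2"
    using spec_step_obs_eq[OF step1 step2] unfolding slh_shape_def by blast
  moreover have "t1' = t2'" using spec_step_com_det[OF step1] step2 \<open>os1 = os2\<close> by blast
  ultimately have step2': "spec_step (t, s2, m2, True) ds os1 (t1', s2', m2', \<beta>2')"
    using step2 by simp
  have "spec_pub_equiv P s1' s2' t1'"
    using spec_pub_equiv_step[OF step1 step2'] shape b1 b2 equiv unfolding slh_shape_def by blast
  moreover have "slh_shape P PA t1'" "b_set_or_pending s1' t1'" "b_set_or_pending s2' t1'"
    using slh_shape_step[OF step1 shape] b_set_or_pending_step[OF step1 _ b1]
      b_set_or_pending_step[OF step2' _ b2] shape unfolding slh_shape_def by auto
  moreover have "\<beta>1'" "\<beta>2'" using spec_step_flag_mono step1 step2 by blast+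
  ultimately show ?thesis using \<open>os1 = os2\<close> \<open>t1' = t2'\<close> by (auto simp: spec_phase_inv_def)
qed

lemma seq_phase_force_step:
  assumes inv: "seq_phase_inv P PA t s1 m1 s2 m2"
    and step1: "spec_step (t, s1, m1, False) [DForce] os1 (t1', s1', m1', \<beta>1')"
    and step2: "spec_step (t, s2, m2, False) [DForce] os2 (t2', s2', m2', \<beta>2')"
  shows "os1 = os2 \<and> slh_inv P PA (t1', s1', m1', \<beta>1') (t2', s2', m2', \<beta>2')"
proof -
  obtain c1 c2 where sim1: "slh_sim P s1 t c1" and sim2: "slh_sim P s2 t c2"
    and equiv: "seq_equiv (c1, s1, m1) (c2, s2, m2)"
    and shape: "slh_shape P PA t" and b0: "s1 bvar = 0" "s2 bvar = 0" and pub: "pub_equiv P s1 s2"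
    using inv unfolding seq_phase_inv_def by blast
  obtain u1 u2 where force1: "s1' = s1" "m1' = m1" "\<beta>1'" "seq_step (t, s1, m1) os1 (u1, s1, m1)"
    and force2: "s2' = s2" "m2' = m2" "\<beta>2'" "seq_step (t, s2, m2) os2 (u2, s2, m2)"
    using spec_step_force[OF step1] spec_step_force[OF step2] by blast
  obtain c1' c2' where
    "seq_steps (c1, s1, m1) os1 (c1', s1, m1)" "seq_steps (c2, s2, m2) os2 (c2', s2, m2)"
    using slh_sim_step[OF sim1 force1(4) b0(1)] slh_sim_step[OF sim2 force2(4) b0(2)] by blast
  moreover have "length os1 = length os2"
    using spec_step_obs_length[OF step1] spec_step_obs_length[OF step2] by simp
  ultimately have "os1 = os2" using seq_equiv_steps[OF equiv] by blast
  moreover have "t1' = t2'" using spec_step_com_det[OF step1] step2 \<open>os1 = os2\<close> by blast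
  moreover have "pending_b_update s1 t1'" "pending_b_update s2 t2'"
    using slh_sim_force[OF sim1 step1] slh_sim_force[OF sim2 step2] by simp_all
  ultimately show ?thesis
    using slh_shape_step[OF step1 shape] force1 force2 b0 pub
    by (auto simp: spec_phase_inv_def b_set_or_pending_def spec_pub_equiv_def pub_equiv_def)
qed

lemma seq_phase_plain_step:
  assumes inv: "seq_phase_inv P PA t s1 m1 s2 m2" and "ds \<noteq> [DForce]"
    and step1: "spec_step (t, s1, m1, False) ds os1 (t1', s1', m1', \<beta>1')"
    and step2: "spec_step (t, s2, m2, False) ds os2 (t2', s2', m2', \<beta>2')"
  shows "os1 = os2 \<and> slh_inv P PA (t1', s1', m1', \<beta>1') (t2', s2', m2', \<beta>2')"
proof -
  obtain c1 c2 where sim1: "slh_sim P s1 t c1" and sim2: "slh_sim P s2 t c2"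
    and unused: "bvar \<notin> used_vars c1" "bvar \<notin> used_vars c2"
    and equiv: "seq_equiv (c1, s1, m1) (c2, s2, m2)"
    and shape: "slh_shape P PA t" and b0: "s1 bvar = 0" "s2 bvar = 0"
    and pub: "pub_equiv P s1 s2" "pub_equiv_mem PA m1 m2"
    using inv unfolding seq_phase_inv_def by blast
  have seq1: "\<not> \<beta>1'" "seq_step (t, s1, m1) os1 (t1', s1', m1')"
    and seq2: "\<not> \<beta>2'" "seq_step (t, s2, m2) os2 (t2', s2', m2')"
    using spec_step_seq_step[OF step1] spec_step_seq_step[OF step2] \<open>ds \<noteq> [DForce]\<close> by auto
  obtain c1' c2' where
    steps: "seq_steps (c1, s1, m1) os1 (c1', s1', m1')" "seq_steps (c2, s2, m2) os2 (c2', s2', m2')"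
    and sim': "slh_sim P s1' t1' c1'" "slh_sim P s2' t2' c2'"
    using slh_sim_step[OF sim1 seq1(2) b0(1)] slh_sim_step[OF sim2 seq2(2) b0(2)] by blast
  moreover have "length os1 = length os2"
    using spec_step_obs_length[OF step1] spec_step_obs_length[OF step2] by simp
  ultimately have "os1 = os2" and equiv': "seq_equiv (c1', s1', m1') (c2', s2', m2')"
    using seq_equiv_steps[OF equiv] by blast+
  have "t1' = t2'" using spec_step_com_det[OF step1] step2 \<open>os1 = os2\<close> by blast
  have unused': "bvar \<notin> used_vars c1'" "bvar \<notin> used_vars c2'" "s1' bvar = 0" "s2' bvar = 0"
    using seq_steps_unused_vars[OF steps(1) unused(1)] seq_steps_unused_vars[OF steps(2) unused(2)] b0
    by auto
  moreover have "pub_equiv P s1' s2'" "pub_equiv_mem PA m1' m2'"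
    using seq_step_pub_equiv[OF seq1(2) seq2(2)] seq_step_pub_equiv_mem[OF seq1(2) seq2(2)]
      shape pub b0 unused' unfolding slh_shape_def by auto
  ultimately show ?thesis
    using \<open>os1 = os2\<close> \<open>t1' = t2'\<close> seq1(1) seq2(1) slh_shape_step[OF step1 shape] sim' equiv'
    by (auto simp: seq_phase_inv_def)
qed

lemma slh_inv_step:
  assumes inv: "slh_inv P PA cfg1 cfg2"
    and step1: "spec_step cfg1 ds os1 cfg1'" and step2: "spec_step cfg2 ds os2 cfg2'"
  shows "os1 = os2 \<and> slh_inv P PA cfg1' cfg2'"
proof -
  obtain t s1 m1 s2 m2 \<beta> where cfgs: "cfg1 = (t, s1, m1, \<beta>)" "cfg2 = (t, s2, m2, \<beta>)"
    using inv by (cases cfg1; cases cfg2) auto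
  obtain t1' s1' m1' \<beta>1' t2' s2' m2' \<beta>2' where
    cfgs': "cfg1' = (t1', s1', m1', \<beta>1')" "cfg2' = (t2', s2', m2', \<beta>2')"
    by (cases cfg1'; cases cfg2') auto
  have step1': "spec_step (t, s1, m1, \<beta>) ds os1 (t1', s1', m1', \<beta>1')"
    and step2': "spec_step (t, s2, m2, \<beta>) ds os2 (t2', s2', m2', \<beta>2')"
    using step1 step2 cfgs cfgs' by simp_all
  show ?thesis
  proof (cases \<beta>)
    case True
    have "spec_phase_inv P PA t s1 s2" using inv cfgs True by simp
    moreover have "spec_step (t, s1, m1, True) ds os1 (t1', s1', m1', \<beta>1')"
      and "spec_step (t, s2, m2, True) ds os2 (t2', s2', m2', \<beta>2')"
      using step1' step2' True by simp_all
    ultimately show ?thesis using spec_phase_step cfgs' by simp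
  next
    case False
    have inv': "seq_phase_inv P PA t s1 m1 s2 m2" using inv cfgs False by simp
    show ?thesis
    proof (cases "ds = [DForce]")
      case True
      from seq_phase_force_step[OF inv', folded True] step1' step2' \<open>\<not> \<beta>\<close> show ?thesis
        using cfgs' by simp
    next
      case False
      from seq_phase_plain_step[OF inv' False] step1' step2' \<open>\<not> \<beta>\<close> show ?thesis
        using cfgs' by simp
    qed
  qed
qed

theorem theorem6p1:
  fixes P :: "vname \<Rightarrow> label" and PA :: "aname \<Rightarrow> label" and c :: com
    and \<rho>1 \<rho>2 :: state and \<mu>1 \<mu>2 :: mem
  assumes "bvar \<notin> used_vars c"
    and "\<rho>1 bvar = 0" and "\<rho>2 bvar = 0"
    and "\<forall>a. length (\<mu>1 a) > 0" and "\<forall>a. length (\<mu>2 a) > 0"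
    and "well_typed P PA True c"
    and "pub_equiv P \<rho>1 \<rho>2"
    and "pub_equiv_mem PA \<mu>1 \<mu>2"
    and "seq_equiv (c, \<rho>1, \<mu>1) (c, \<rho>2, \<mu>2)"
  shows "spec_equiv (fvslh P c, \<rho>1, \<mu>1, False) (fvslh P c, \<rho>2, \<mu>2, False)"
proof (rule spec_equiv_if_lockstep)
  have "slh_shape P PA (fvslh P c)" using slh_shape_fvslh assms(6,1) .
  moreover have "slh_sim P \<rho>1 (fvslh P c) c" "slh_sim P \<rho>2 (fvslh P c) c"
    by (rule slh_sim_fvslh)+
  ultimately show "slh_inv P PA (fvslh P c, \<rho>1, \<mu>1, False) (fvslh P c, \<rho>2, \<mu>2, False)"
    using assms(1-3,7-9) by (simp add: seq_phase_inv_def) blast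
  show "fst cfg1 = fst cfg2" if "slh_inv P PA cfg1 cfg2" for cfg1 cfg2
    using that by (cases cfg1; cases cfg2) auto
qed (rule slh_inv_step)

end
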